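(* There is no edge-to-edge tiling of the sphere by $f=12$ congruent $a^4b$-pentagons with angles $(\alpha,\beta,\gamma,\delta,\epsilon)=(\pi,\tfrac23\pi,\tfrac12\pi,\tfrac12\pi,\tfrac23\pi)$.
   Context: An $a^4b$-pentagon is a spherical pentagon with four edges of length $a$ and one edge of length $b\neq a$; $\alpha$ is the vertex opposite the $b$-edge, $\beta,\gamma$ are adjacent to $\alpha$, $\delta$ is the endpoint of the $b$-edge adjacent to $\beta$ and $\epsilon$ the endpoint of the $b$-edge adjacent to $\gamma$. Tiles are congruent copies, mirror images allowed. *)

theory Defs
  imports "HOL-Analysis.Analysis"
begin

definition sarc :: "real^3 \<Rightarrow> real^3 \<Rightarrow> (real^3) set" where
  "sarc p q = (\<lambda>t. (let x = (1 - t) *\<^sub>R p + t *\<^sub>R q in x /\<^sub>R norm x)) ` {0..1}"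

definition poly_edge :: "(real^3) list \<Rightarrow> nat \<Rightarrow> (real^3) set" where
  "poly_edge vs k = sarc (vs ! k) (vs ! (Suc k mod length vs))"

definition poly_curve :: "(real^3) list \<Rightarrow> (real^3) set" where
  "poly_curve vs = (\<Union>k<length vs. poly_edge vs k)"

text \<open>T is a (closed) spherical polygon with vertices vs in cyclic order: the boundary
  is a simple closed curve made of minor great arcs, and T is the closure of one of the
  complementary regions (a component of the complement together with the curve).\<close>
definition spherical_polygon :: "(real^3) set \<Rightarrow> (real^3) list \<Rightarrow> bool" where
  "spherical_polygon T vs \<longleftrightarrow>
     (let n = length vs; K = poly_curve vs in
       3 \<le> n \<and> set vs \<subseteq> sphere 0 1 \<and> distinct vs \<and>
       (\<forall>k<n. vs ! (Suc k mod n) \<noteq> - (vs ! k)) \<and>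
       (\<forall>k<n. \<forall>l<n. k \<noteq> l \<longrightarrow>
          poly_edge vs k \<inter> poly_edge vs l \<subseteq>
            {vs ! k, vs ! (Suc k mod n)} \<inter> {vs ! l, vs ! (Suc l mod n)}) \<and>
       (\<exists>x \<in> sphere 0 1 - K. T = connected_component_set (sphere 0 1 - K) x \<union> K))"

definition sdist :: "real^3 \<Rightarrow> real^3 \<Rightarrow> real" where
  "sdist p q = arccos (p \<bullet> q)"

definition tangent_dir :: "real^3 \<Rightarrow> real^3 \<Rightarrow> real^3" where
  "tangent_dir v u = (let x = u - (v \<bullet> u) *\<^sub>R v in x /\<^sub>R norm x)"

text \<open>The interior angle of the region T at the vertex v, whose neighbouring vertices
  are u and w, equals \<theta>: rotating the tangent direction towards u by \<theta> (in one of the two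
  orientations of the tangent plane) gives the tangent direction towards w, and locally near v
  the region T is exactly the sector swept by this rotation.\<close>
definition interior_angle :: "(real^3) set \<Rightarrow> real^3 \<Rightarrow> real^3 \<Rightarrow> real^3 \<Rightarrow> real \<Rightarrow> bool" where
  "interior_angle T u v w \<theta> \<longleftrightarrow>
     0 < \<theta> \<and> \<theta> < 2 * pi \<and>
     (\<exists>\<sigma> \<in> {-1, 1::real}.
        let n1 = tangent_dir v u;
            n2 = \<sigma> *\<^sub>R cross3 v n1;
            dir = (\<lambda>\<phi>. cos \<phi> *\<^sub>R n1 + sin \<phi> *\<^sub>R n2)
        in tangent_dir v w = dir \<theta> \<and>
           (\<exists>\<epsilon>>0. \<forall>r. 0 < r \<and> r < \<epsilon> \<longrightarrow>
               (\<forall>\<phi>. 0 < \<phi> \<and> \<phi> < 2 * pi \<and> \<phi> \<noteq> \<theta> \<longrightarrow>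
                  (cos r *\<^sub>R v + sin r *\<^sub>R dir \<phi> \<in> T \<longleftrightarrow> \<phi> < \<theta>))))"

text \<open>a^4b-pentagon with vertices alpha=A, beta=B, gamma=C, delta=D, epsilon=E
  (cyclic order A,B,D,E,C), edge lengths AB=BD=EC=CA=a, DE=b with b \<noteq> a,
  and prescribed interior angles.\<close>
definition a4b_pentagon :: "(real^3) set \<Rightarrow> real^3 \<Rightarrow> real^3 \<Rightarrow> real^3 \<Rightarrow> real^3 \<Rightarrow> real^3
     \<Rightarrow> real \<Rightarrow> real \<Rightarrow> real \<Rightarrow> real \<Rightarrow> real \<Rightarrow> real \<Rightarrow> real \<Rightarrow> bool" where
  "a4b_pentagon T A B C D E a b al be ga de ep \<longleftrightarrow>
     spherical_polygon T [A, B, D, E, C] \<and>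
     sdist A B = a \<and> sdist B D = a \<and> sdist D E = b \<and> sdist E C = a \<and> sdist C A = a \<and>
     b \<noteq> a \<and>
     interior_angle T C A B al \<and>
     interior_angle T A B D be \<and>
     interior_angle T B D E de \<and>
     interior_angle T D E C ep \<and>
     interior_angle T E C A ga"

definition edge_to_edge_tiling :: "nat \<Rightarrow> (nat \<Rightarrow> (real^3) set) \<Rightarrow> (nat \<Rightarrow> (real^3) list) \<Rightarrow> bool" where
  "edge_to_edge_tiling f P V \<longleftrightarrow>
     (\<forall>i<f. spherical_polygon (P i) (V i)) \<and>
     (\<Union>i<f. P i) = sphere 0 1 \<and>
     (\<forall>i<f. \<forall>j<f. i \<noteq> j \<longrightarrow> P i \<inter> P j \<subseteq> poly_curve (V i)) \<and>
     (\<forall>i<f. \<forall>k<length (V i). \<exists>j<f. j \<noteq> i \<and>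
         (\<exists>l<length (V j). poly_edge (V i) k = poly_edge (V j) l)) \<and>
     (\<forall>i<f. \<forall>j<f. \<forall>k<length (V i). \<forall>v \<in> set (V j).
         v \<in> poly_edge (V i) k \<longrightarrow> v = V i ! k \<or> v = V i ! (Suc k mod length (V i))) \<and>
     (\<forall>i<f. \<forall>v \<in> set (V i). 3 \<le> card {j. j < f \<and> v \<in> set (V j)})"

end

theory Submission
  imports Defs
begin

(* Near a vertex v, each tile containing v fills an open circular sector at v whose width is its
   interior angle there, and sectors of different tiles are disjoint: their overlap would be an
   open patch covered by the finitely many great circles carrying the tile boundaries.

   Take the vertex A of a tile t, where the angle is \<alpha> = \<pi>. The tiles across the edges AB and AC
   of t must fill the remaining half-turn; they are distinct (otherwise a third tile at A, which
   exists since every vertex has degree at least 3, finds no room), so both have a right angle at A,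
   i.e. a \<gamma> or a \<delta>, and they share their third edge at A. Its length is a at a \<gamma> and b at a \<delta>
   (the edge shared with t has length a), so the two corners are equal. Two \<delta>'s are impossible:
   the tile across AC would then have its \<beta> at the \<gamma>-vertex C of t, next to the \<gamma> of t, leaving
   a gap of 2\<pi> - \<pi>/2 - 2\<pi>/3 = 5\<pi>/6, which is neither a single angle nor wide enough (\<pi>) for two.
   Hence A is the \<gamma>-vertex of two tiles and the \<alpha>-vertex of no other tile. The twelve \<alpha>-vertices
   are thus distinct and need 24 of the twelve \<gamma>-corners. *)

lemma tangent_dir_orthogonal_transformation:
  assumes "orthogonal_transformation g"
  shows "tangent_dir (g v) (g u) = g (tangent_dir v u)"
proof -
  have lin: "linear g" and norm: "\<And>x. norm (g x) = norm x"
    using assms by (auto simp: orthogonal_transformation)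
  have "g v \<bullet> g u = v \<bullet> u"
    using assms by (simp add: orthogonal_transformation_def)
  then have "g u - (g v \<bullet> g u) *\<^sub>R g v = g (u - (v \<bullet> u) *\<^sub>R v)"
    by (simp add: linear_diff[OF lin] linear_scale[OF lin])
  then show ?thesis
    unfolding tangent_dir_def Let_def by (simp add: norm linear_scale[OF lin])
qed

lemma sdist_orthogonal_transformation:
  "orthogonal_transformation g \<Longrightarrow> sdist (g p) (g q) = sdist p q"
  by (simp add: sdist_def orthogonal_transformation_def)

lemma interior_angle_orthogonal_transformation:
  assumes g: "orthogonal_transformation g" and "interior_angle T u v w \<theta>"
  shows "interior_angle (g ` T) (g u) (g v) (g w) \<theta>"
proof -
  have lin: "linear g"
    using g by (simp add: orthogonal_transformation)
  define d where "d = det (matrix g)"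
  have d: "d * d = 1" and d1: "d \<in> {-1, 1}"
    using orthogonal_transformation_det[OF g] by (auto simp: d_def abs_if split: if_splits)
  have comb: "a *\<^sub>R g x + b *\<^sub>R g y = g (a *\<^sub>R x + b *\<^sub>R y)" for a b x y
    by (simp add: linear_add[OF lin] linear_scale[OF lin])
  have mem: "g x \<in> g ` T \<longleftrightarrow> x \<in> T" for x
    using orthogonal_transformation_inj[OF g] by (simp add: inj_image_mem_iff)
  from assms(2) obtain \<sigma> where \<sigma>: "\<sigma> \<in> {-1, 1}" and
    "let n1 = tangent_dir v u; n2 = \<sigma> *\<^sub>R cross3 v n1;
         dir = (\<lambda>\<phi>. cos \<phi> *\<^sub>R n1 + sin \<phi> *\<^sub>R n2)
     in tangent_dir v w = dir \<theta> \<and>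
        (\<exists>\<epsilon>>0. \<forall>r. 0 < r \<and> r < \<epsilon> \<longrightarrow>
           (\<forall>\<phi>. 0 < \<phi> \<and> \<phi> < 2 * pi \<and> \<phi> \<noteq> \<theta> \<longrightarrow>
              (cos r *\<^sub>R v + sin r *\<^sub>R dir \<phi> \<in> T \<longleftrightarrow> \<phi> < \<theta>)))"
    and "0 < \<theta>" "\<theta> < 2 * pi"
    unfolding interior_angle_def by blast
  moreover have "(d * \<sigma>) *\<^sub>R cross3 (g v) (g x) = g (\<sigma> *\<^sub>R cross3 v x)" for x
    using cross_orthogonal_transformation[OF g, of v x] d
    by (simp add: d_def[symmetric] linear_scale[OF lin])
  ultimately show ?thesis
    unfolding interior_angle_def Let_def
    using d1 by (intro conjI bexI[of _ "d * \<sigma>"])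
      (auto simp: tangent_dir_orthogonal_transformation[OF g] comb mem)
qed

section \<open>Polar coordinates around a point of the sphere\<close>

lemma cross3_unit_nonzero:
  fixes p q :: "real^3"
  assumes "norm p = 1" "norm q = 1" "q \<noteq> p" "q \<noteq> - p"
  shows "cross3 p q \<noteq> 0"
proof
  assume "cross3 p q = 0"
  then have "(p \<bullet> q)\<^sup>2 = 1"
    using norm_cross_dot[of p q] assms by simp
  then have "p \<bullet> q = 1 \<or> p \<bullet> q = -1"
    by (simp add: power2_eq_1_iff)
  moreover have "(norm (q - p))\<^sup>2 = 2 - 2 * (p \<bullet> q)" "(norm (q + p))\<^sup>2 = 2 + 2 * (p \<bullet> q)"
    using assms(1,2) by (simp_all add: power2_norm_eq_inner inner_diff inner_add inner_commute norm_eq_1)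
  ultimately show False
    using assms(3,4) by (auto simp: add_eq_0_iff2)
qed

lemma tangent_dir_unit:
  fixes u v :: "real^3"
  assumes "norm v = 1" "norm u = 1" "u \<noteq> v" "u \<noteq> - v"
  shows "norm (tangent_dir v u) = 1" "v \<bullet> tangent_dir v u = 0"
proof -
  define x where "x = u - (v \<bullet> u) *\<^sub>R v"
  have "x \<noteq> 0"
  proof
    assume "x = 0"
    then have u: "u = (v \<bullet> u) *\<^sub>R v"
      by (simp add: x_def)
    then have "\<bar>v \<bullet> u\<bar> = 1"
      using assms(1,2) by (metis norm_scaleR mult_1_right)
    then show False
      using u assms(3,4) by (auto simp: abs_if split: if_splits)
  qed
  moreover have "v \<bullet> x = 0"
    using assms(1) by (simp add: x_def inner_diff_right norm_eq_1)
  ultimately show "norm (tangent_dir v u) = 1" "v \<bullet> tangent_dir v u = 0"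
    by (simp_all add: tangent_dir_def x_def[symmetric])
qed

definition tangent_frame :: "real^3 \<Rightarrow> real^3 \<Rightarrow> real^3 \<Rightarrow> bool" where
  "tangent_frame v e1 e2 \<longleftrightarrow> norm v = 1 \<and> norm e1 = 1 \<and> v \<bullet> e1 = 0 \<and>
     (\<exists>s\<in>{-1, 1::real}. e2 = s *\<^sub>R cross3 v e1)"

definition frame_dir :: "real^3 \<Rightarrow> real^3 \<Rightarrow> real \<Rightarrow> real^3" where
  "frame_dir e1 e2 \<phi> = cos \<phi> *\<^sub>R e1 + sin \<phi> *\<^sub>R e2"

definition polar_point :: "real^3 \<Rightarrow> real^3 \<Rightarrow> real^3 \<Rightarrow> real \<Rightarrow> real \<Rightarrow> real^3" where
  "polar_point v e1 e2 r \<phi> = cos r *\<^sub>R v + sin r *\<^sub>R frame_dir e1 e2 \<phi>"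

definition sector_in :: "(real^3) set \<Rightarrow> real^3 \<Rightarrow> real^3 \<Rightarrow> real^3 \<Rightarrow> real \<Rightarrow> real \<Rightarrow> bool" where
  "sector_in T v e1 e2 lo \<theta> \<longleftrightarrow>
     (\<exists>\<epsilon>>0. \<forall>r \<phi>. 0 < r \<and> r < \<epsilon> \<and> lo < \<phi> \<and> \<phi> < lo + \<theta> \<longrightarrow> polar_point v e1 e2 r \<phi> \<in> T)"

lemma tangent_frame_inner:
  assumes "tangent_frame v e1 e2"
  shows "v \<bullet> v = 1" "e1 \<bullet> e1 = 1" "e2 \<bullet> e2 = 1"
    and "v \<bullet> e1 = 0" "v \<bullet> e2 = 0" "e1 \<bullet> e2 = 0" "e1 \<bullet> v = 0" "e2 \<bullet> v = 0" "e2 \<bullet> e1 = 0"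
proof -
  obtain s :: real where s: "s \<in> {-1, 1}" "e2 = s *\<^sub>R cross3 v e1"
    and v: "norm v = 1" "norm e1 = 1" "v \<bullet> e1 = 0"
    using assms unfolding tangent_frame_def by blast
  have "(norm (cross3 v e1))\<^sup>2 = 1"
    using norm_cross_dot[of v e1] v by simp
  then have "cross3 v e1 \<bullet> cross3 v e1 = 1"
    by (simp add: power2_norm_eq_inner)
  then show "v \<bullet> v = 1" "e1 \<bullet> e1 = 1" "e2 \<bullet> e2 = 1"
    and "v \<bullet> e1 = 0" "v \<bullet> e2 = 0" "e1 \<bullet> e2 = 0" "e1 \<bullet> v = 0" "e2 \<bullet> v = 0" "e2 \<bullet> e1 = 0"
    using s v by (auto simp: norm_eq_1 dot_cross_self inner_commute)
qed

lemma tangent_frame_orthogonal_eq_0: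
  assumes "tangent_frame v e1 e2" "y \<bullet> v = 0" "y \<bullet> e1 = 0" "y \<bullet> e2 = 0"
  shows "y = 0"
proof -
  obtain s :: real where s: "s \<in> {-1, 1}" "e2 = s *\<^sub>R cross3 v e1"
    using assms(1) unfolding tangent_frame_def by blast
  have "y \<bullet> cross3 v e1 = 0"
    using assms(4) s by auto
  moreover have "cross3 y (cross3 v e1) = 0"
    using Lagrange[of y v e1] assms(2,3) by (simp add: inner_commute)
  moreover have "norm (cross3 v e1) = 1"
    using tangent_frame_inner[OF assms(1)] s by (auto simp: norm_eq_1)
  ultimately show ?thesis
    using norm_cross_dot[of y "cross3 v e1"] by simp
qed

lemma tangent_frame_decomp:
  assumes "tangent_frame v e1 e2" "x \<bullet> v = 0"
  shows "x = (x \<bullet> e1) *\<^sub>R e1 + (x \<bullet> e2) *\<^sub>R e2"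
proof -
  note frame = tangent_frame_inner[OF assms(1)]
  have "x - (x \<bullet> e1) *\<^sub>R e1 - (x \<bullet> e2) *\<^sub>R e2 = 0"
    using assms frame
    by (intro tangent_frame_orthogonal_eq_0[OF assms(1)]) (auto simp: inner_diff_left)
  then show ?thesis
    by (simp add: algebra_simps)
qed

lemma tangent_frame_cross:
  assumes "tangent_frame v e1 e2"
  obtains s :: real where "s \<in> {-1, 1}" "cross3 v e1 = s *\<^sub>R e2" "cross3 v e2 = - s *\<^sub>R e1"
proof -
  obtain s :: real where s: "s \<in> {-1, 1}" "e2 = s *\<^sub>R cross3 v e1"
    using assms unfolding tangent_frame_def by blast
  have "cross3 v e1 = s *\<^sub>R e2"
    using s(1) unfolding s(2) by auto
  moreover have "cross3 v e2 = - s *\<^sub>R e1"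
    using s Lagrange[of v v e1] tangent_frame_inner[OF assms] by (simp add: cross_mult_right)
  ultimately show ?thesis
    using s that by blast
qed

lemma frame_dir_inner:
  assumes "tangent_frame v e1 e2"
  shows "frame_dir e1 e2 \<phi> \<bullet> e1 = cos \<phi>" "frame_dir e1 e2 \<phi> \<bullet> e2 = sin \<phi>"
  using tangent_frame_inner[OF assms]
  by (simp_all add: frame_dir_def inner_add_left)

lemma frame_dir_eq_imp_eq:
  assumes "tangent_frame v e1 e2" "frame_dir e1 e2 x = frame_dir e1 e2 y" "\<bar>x - y\<bar> < 2 * pi"
  shows "x = y"
proof -
  have "cos x = cos y" "sin x = sin y"
    using frame_dir_inner[OF assms(1)] assms(2) by metis+
  then obtain n :: int where n: "x = y + 2 * pi * n"
    using sin_cos_eq_iff by metis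
  then have "\<bar>real_of_int n\<bar> < 1"
    using assms(3) pi_gt_zero by (simp add: abs_mult)
  then show ?thesis
    using n by simp
qed

lemma frame_dir_add_2pi: "frame_dir e1 e2 (x + 2 * pi * of_int n) = frame_dir e1 e2 x"
  using sin_cos_eq_iff[of "x + 2 * pi * of_int n" x] by (auto simp: frame_dir_def)

lemma frame_dir_change:
  assumes "tangent_frame v e1 e2" "tangent_frame v n1 n2"
  obtains \<tau> \<psi> :: real where "\<tau> \<in> {-1, 1}" "\<And>\<phi>. frame_dir n1 n2 \<phi> = frame_dir e1 e2 (\<psi> + \<tau> * \<phi>)"
proof -
  note e = tangent_frame_inner[OF assms(1)] and n = tangent_frame_inner[OF assms(2)]
  have dec: "n1 = (n1 \<bullet> e1) *\<^sub>R e1 + (n1 \<bullet> e2) *\<^sub>R e2"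
    using n by (intro tangent_frame_decomp[OF assms(1)]) (simp add: inner_commute)
  have "(n1 \<bullet> e1)\<^sup>2 + (n1 \<bullet> e2)\<^sup>2 = 1"
    using n(2) e by (subst (asm) dec, subst (asm) dec)
      (simp add: inner_add_left inner_add_right power2_eq_square inner_commute)
  then obtain \<psi> where \<psi>: "n1 \<bullet> e1 = cos \<psi>" "n1 \<bullet> e2 = sin \<psi>"
    using sincos_total_2pi by metis
  then have n1: "n1 = frame_dir e1 e2 \<psi>"
    using dec by (simp add: frame_dir_def)
  obtain s :: real where s: "s \<in> {-1, 1}" "cross3 v e1 = s *\<^sub>R e2" "cross3 v e2 = - s *\<^sub>R e1"
    using tangent_frame_cross[OF assms(1)] by blast
  obtain \<sigma> :: real where \<sigma>: "\<sigma> \<in> {-1, 1}" "n2 = \<sigma> *\<^sub>R cross3 v n1"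
    using assms(2) unfolding tangent_frame_def by blast
  have n2: "n2 = (\<sigma> * s) *\<^sub>R (cos \<psi> *\<^sub>R e2 - sin \<psi> *\<^sub>R e1)"
    using \<sigma>(2) s(2,3) by (simp add: n1 frame_dir_def cross_add_right cross_mult_right algebra_simps)
  have "frame_dir n1 n2 \<phi> = frame_dir e1 e2 (\<psi> + (\<sigma> * s) * \<phi>)" for \<phi>
    using \<sigma>(1) s(1)
    by (auto simp: n1 n2 frame_dir_def cos_add sin_add algebra_simps)
  moreover have "\<sigma> * s \<in> {-1, 1}"
    using \<sigma>(1) s(1) by auto
  ultimately show ?thesis
    using that by blast
qed

section \<open>Interior angles as sectors\<close>

lemma interior_angle_frame:
  assumes "interior_angle T u v w \<theta>" "norm v = 1" "norm u = 1" "u \<noteq> v" "u \<noteq> - v"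
  obtains e2 where "tangent_frame v (tangent_dir v u) e2"
    "frame_dir (tangent_dir v u) e2 \<theta> = tangent_dir v w" "sector_in T v (tangent_dir v u) e2 0 \<theta>"
proof -
  from assms(1)[unfolded interior_angle_def] obtain \<sigma> :: real where \<sigma>: "\<sigma> \<in> {-1, 1}" and \<theta>: "0 < \<theta>" "\<theta> < 2 * pi" and
    main: "let n1 = tangent_dir v u; n2 = \<sigma> *\<^sub>R cross3 v n1; dir = (\<lambda>\<phi>. cos \<phi> *\<^sub>R n1 + sin \<phi> *\<^sub>R n2)
      in tangent_dir v w = dir \<theta> \<and>
         (\<exists>\<epsilon>>0. \<forall>r. 0 < r \<and> r < \<epsilon> \<longrightarrow> (\<forall>\<phi>. 0 < \<phi> \<and> \<phi> < 2 * pi \<and> \<phi> \<noteq> \<theta> \<longrightarrow>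
            (cos r *\<^sub>R v + sin r *\<^sub>R dir \<phi> \<in> T \<longleftrightarrow> \<phi> < \<theta>)))"
    by (elim conjE bexE) (rule that)
  define n1 where "n1 = tangent_dir v u"
  define n2 where "n2 = \<sigma> *\<^sub>R cross3 v n1"
  obtain \<epsilon> where w: "tangent_dir v w = frame_dir n1 n2 \<theta>" and "0 < \<epsilon>"
    and near: "\<forall>r. 0 < r \<and> r < \<epsilon> \<longrightarrow> (\<forall>\<phi>. 0 < \<phi> \<and> \<phi> < 2 * pi \<and> \<phi> \<noteq> \<theta> \<longrightarrow>
        (polar_point v n1 n2 r \<phi> \<in> T \<longleftrightarrow> \<phi> < \<theta>))"
    using main unfolding n1_def n2_def Let_def frame_dir_def polar_point_def by blast
  have "tangent_frame v n1 n2"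
    using tangent_dir_unit[OF assms(2-5)] assms(2) \<sigma>
    unfolding tangent_frame_def n1_def n2_def by blast
  moreover have "sector_in T v n1 n2 0 \<theta>"
    unfolding sector_in_def using \<open>0 < \<epsilon>\<close> near \<theta> by (intro exI[of _ \<epsilon>]) auto
  ultimately show ?thesis
    using that[of n2] w unfolding n1_def by simp
qed

lemma sector_in_change_frame:
  assumes "sector_in T v n1 n2 0 \<theta>" "\<tau> \<in> {-1, 1}"
    and change: "\<And>\<phi>. frame_dir n1 n2 \<phi> = frame_dir e1 e2 (\<psi> + \<tau> * \<phi>)"
  shows "sector_in T v e1 e2 (if \<tau> = 1 then \<psi> else \<psi> - \<theta>) \<theta>"
proof -
  obtain \<epsilon> where "0 < \<epsilon>"
    and near: "\<forall>r \<phi>. 0 < r \<and> r < \<epsilon> \<and> 0 < \<phi> \<and> \<phi> < 0 + \<theta> \<longrightarrow> polar_point v n1 n2 r \<phi> \<in> T"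
    using assms(1) unfolding sector_in_def by blast
  have polar: "polar_point v n1 n2 r \<phi> = polar_point v e1 e2 r (\<psi> + \<tau> * \<phi>)" for r \<phi>
    by (simp add: polar_point_def change)
  show ?thesis
    unfolding sector_in_def
  proof (intro exI[of _ \<epsilon>] conjI allI impI)
    fix r \<phi>
    assume "0 < r \<and> r < \<epsilon> \<and> (if \<tau> = 1 then \<psi> else \<psi> - \<theta>) < \<phi> \<and> \<phi> < (if \<tau> = 1 then \<psi> else \<psi> - \<theta>) + \<theta>"
    then have "polar_point v n1 n2 r (\<tau> * (\<phi> - \<psi>)) \<in> T"
      using near assms(2) by (auto split: if_splits)
    then show "polar_point v e1 e2 r \<phi> \<in> T"
      using assms(2) unfolding polar by auto
  qed fact
qed

lemma interior_angle_sector: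
  assumes "interior_angle T u v w \<theta>" "tangent_frame v e1 e2" "norm u = 1" "u \<noteq> v" "u \<noteq> - v"
  obtains lo where "{frame_dir e1 e2 lo, frame_dir e1 e2 (lo + \<theta>)} = {tangent_dir v u, tangent_dir v w}"
    "sector_in T v e1 e2 lo \<theta>"
proof -
  define n1 where "n1 = tangent_dir v u"
  have "norm v = 1"
    using assms(2) by (simp add: tangent_frame_def)
  then obtain n2 where frame: "tangent_frame v n1 n2" and w: "frame_dir n1 n2 \<theta> = tangent_dir v w"
    and sector: "sector_in T v n1 n2 0 \<theta>"
    using interior_angle_frame[OF assms(1) _ assms(3-5)] unfolding n1_def by metis
  obtain \<tau> \<psi> :: real where \<tau>: "\<tau> \<in> {-1, 1}"
    and change: "\<And>\<phi>. frame_dir n1 n2 \<phi> = frame_dir e1 e2 (\<psi> + \<tau> * \<phi>)"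
    by (rule frame_dir_change[OF assms(2) frame]) blast
  have "frame_dir e1 e2 \<psi> = tangent_dir v u"
    using change[of 0] by (simp add: frame_dir_def n1_def)
  moreover have "frame_dir e1 e2 (\<psi> + \<tau> * \<theta>) = tangent_dir v w"
    using w change[of \<theta>] by simp
  moreover have "sector_in T v e1 e2 (if \<tau> = 1 then \<psi> else \<psi> - \<theta>) \<theta>"
    by (rule sector_in_change_frame[OF sector \<tau> change])
  ultimately show ?thesis
    using that[of "if \<tau> = 1 then \<psi> else \<psi> - \<theta>"] \<tau> by (auto simp: insert_commute)
qed

lemma sector_in_shift:
  assumes "sector_in T v e1 e2 lo \<theta>"
  shows "sector_in T v e1 e2 (lo + 2 * pi * of_int n) \<theta>"
proof -
  obtain \<epsilon> where "0 < \<epsilon>"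
    and near: "\<forall>r \<phi>. 0 < r \<and> r < \<epsilon> \<and> lo < \<phi> \<and> \<phi> < lo + \<theta> \<longrightarrow> polar_point v e1 e2 r \<phi> \<in> T"
    using assms unfolding sector_in_def by blast
  have shift: "polar_point v e1 e2 r \<phi> = polar_point v e1 e2 r (\<phi> - 2 * pi * of_int n)" for r \<phi>
    using frame_dir_add_2pi[of e1 e2 "\<phi> - 2 * pi * of_int n" n] by (simp add: polar_point_def)
  then show ?thesis
    unfolding sector_in_def
  proof (intro exI[of _ \<epsilon>] conjI allI impI)
    fix r \<phi>
    assume "0 < r \<and> r < \<epsilon> \<and> lo + 2 * pi * of_int n < \<phi> \<and> \<phi> < lo + 2 * pi * of_int n + \<theta>"
    then have "polar_point v e1 e2 r (\<phi> - 2 * pi * of_int n) \<in> T"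
      using near[rule_format, of r "\<phi> - 2 * pi * of_int n"] by simp
    then show "polar_point v e1 e2 r \<phi> \<in> T"
      using shift by simp
  qed (rule \<open>0 < \<epsilon>\<close>)
qed

lemma pigeonhole_two:
  assumes "infinite A" "finite B" "\<forall>a\<in>A. \<exists>b\<in>B. R a b"
  obtains a a' b where "a \<in> A" "a' \<in> A" "a \<noteq> a'" "b \<in> B" "R a b" "R a' b"
proof -
  obtain b where b: "b \<in> B" "infinite {a \<in> A. R a b}"
    using pigeonhole_infinite_rel[OF assms] by blast
  then obtain a where a: "a \<in> {a \<in> A. R a b}"
    using infinite_imp_nonempty by blast
  have "infinite ({a \<in> A. R a b} - {a})"
    using b by simp
  then obtain a' where "a' \<in> {a \<in> A. R a b} - {a}"
    using infinite_imp_nonempty by blast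
  then show ?thesis
    using a b that by blast
qed

lemma arc_in_finitely_many_planes:
  fixes x y :: "real^3"
  assumes "finite Ns" "a < b" "b \<le> a + pi"
    and "\<forall>t\<in>{a<..<b}. \<exists>N\<in>Ns. (cos t *\<^sub>R x + sin t *\<^sub>R y) \<bullet> N = 0"
  obtains N where "N \<in> Ns" "x \<bullet> N = 0" "y \<bullet> N = 0"
proof -
  obtain t t' N where t: "t \<in> {a<..<b}" "t' \<in> {a<..<b}" "t \<noteq> t'" "N \<in> Ns"
    and "(cos t *\<^sub>R x + sin t *\<^sub>R y) \<bullet> N = 0" "(cos t' *\<^sub>R x + sin t' *\<^sub>R y) \<bullet> N = 0"
    using pigeonhole_two[OF infinite_Ioo[OF assms(2)] assms(1,4)] by blast
  then have eq: "cos t * (x \<bullet> N) + sin t * (y \<bullet> N) = 0" "cos t' * (x \<bullet> N) + sin t' * (y \<bullet> N) = 0"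
    by (simp_all add: inner_add_left)
  have "sin (t' - t) \<noteq> 0"
    using sin_eq_0_pi[of "t' - t"] t assms(3) by auto
  moreover have "(x \<bullet> N) * sin (t' - t) = sin t' * (cos t * (x \<bullet> N) + sin t * (y \<bullet> N))
      - sin t * (cos t' * (x \<bullet> N) + sin t' * (y \<bullet> N))"
    "(y \<bullet> N) * sin (t' - t) = cos t * (cos t' * (x \<bullet> N) + sin t' * (y \<bullet> N))
      - cos t' * (cos t * (x \<bullet> N) + sin t * (y \<bullet> N))"
    by (simp_all add: sin_diff algebra_simps)
  ultimately have "x \<bullet> N = 0" "y \<bullet> N = 0"
    by (simp_all only: eq) simp_all
  then show ?thesis
    using that t(4) by blast
qed

lemma polar_patch_not_in_planes:
  assumes frame: "tangent_frame v e1 e2" and Ns: "finite Ns" "0 \<notin> Ns" and "0 < \<epsilon>" "lo < hi"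
    and planes: "\<forall>r \<phi>. 0 < r \<and> r < \<epsilon> \<and> lo < \<phi> \<and> \<phi> < hi \<longrightarrow>
      (\<exists>N\<in>Ns. polar_point v e1 e2 r \<phi> \<bullet> N = 0)"
  shows False
proof -
  define Nv where "Nv = {N \<in> Ns. v \<bullet> N = 0}"
  have "\<exists>N\<in>Nv. (cos \<phi> *\<^sub>R e1 + sin \<phi> *\<^sub>R e2) \<bullet> N = 0" if "lo < \<phi>" "\<phi> < hi" for \<phi>
  proof -
    have "\<forall>r\<in>{0<..<min \<epsilon> pi}. \<exists>N\<in>Ns. (cos r *\<^sub>R v + sin r *\<^sub>R frame_dir e1 e2 \<phi>) \<bullet> N = 0"
      using planes that by (simp add: polar_point_def)
    moreover have "0 < min \<epsilon> pi" "min \<epsilon> pi \<le> 0 + pi"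
      using \<open>0 < \<epsilon>\<close> pi_gt_zero by auto
    ultimately obtain N where "N \<in> Ns" "v \<bullet> N = 0" "frame_dir e1 e2 \<phi> \<bullet> N = 0"
      using arc_in_finitely_many_planes[OF Ns(1)] by metis
    then show ?thesis
      by (auto simp: Nv_def frame_dir_def)
  qed
  then have "\<forall>\<phi>\<in>{lo<..<min hi (lo + pi)}. \<exists>N\<in>Nv. (cos \<phi> *\<^sub>R e1 + sin \<phi> *\<^sub>R e2) \<bullet> N = 0"
    by simp
  moreover have "finite Nv" "lo < min hi (lo + pi)" "min hi (lo + pi) \<le> lo + pi"
    using Ns \<open>lo < hi\<close> pi_gt_zero by (auto simp: Nv_def)
  ultimately obtain N where "N \<in> Nv" "e1 \<bullet> N = 0" "e2 \<bullet> N = 0"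
    using arc_in_finitely_many_planes by metis
  then have "N = 0"
    using tangent_frame_orthogonal_eq_0[OF frame] by (auto simp: Nv_def inner_commute)
  then show False
    using \<open>N \<in> Nv\<close> Ns by (simp add: Nv_def)
qed

lemma sarc_orthogonal_cross: "x \<in> sarc p q \<Longrightarrow> x \<bullet> cross3 p q = 0"
  by (auto simp: sarc_def Let_def inner_add_left dot_cross_self)

lemma spherical_polygonD:
  assumes "spherical_polygon T vs"
  shows "3 \<le> length vs" "set vs \<subseteq> sphere 0 1" "distinct vs"
    "\<forall>k<length vs. vs ! (Suc k mod length vs) \<noteq> - (vs ! k)"
  using assms unfolding spherical_polygon_def Let_def by blast+

lemma spherical_polygon_curve_in_planes:
  assumes "spherical_polygon T vs"
  obtains Ns where "finite Ns" "0 \<notin> Ns" "\<forall>x\<in>poly_curve vs. \<exists>N\<in>Ns. x \<bullet> N = 0"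
proof -
  define n where "n = length vs"
  have n: "3 \<le> n" and vs: "set vs \<subseteq> sphere 0 1" "distinct vs"
    and antipodal: "\<forall>k<n. vs ! (Suc k mod n) \<noteq> - (vs ! k)"
    using spherical_polygonD[OF assms] unfolding n_def by blast+
  define Ns where "Ns = (\<lambda>k. cross3 (vs ! k) (vs ! (Suc k mod n))) ` {..<n}"
  have "cross3 (vs ! k) (vs ! (Suc k mod n)) \<noteq> 0" if "k < n" for k
  proof (rule cross3_unit_nonzero)
    have k': "Suc k mod n < n" "Suc k mod n \<noteq> k"
      using that n by (auto simp: mod_Suc)
    then show "norm (vs ! k) = 1" "norm (vs ! (Suc k mod n)) = 1"
      using vs(1) that by (metis mem_sphere_0 n_def nth_mem subsetD)+
    show "vs ! (Suc k mod n) \<noteq> vs ! k"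
      using vs(2) k' that by (simp add: n_def nth_eq_iff_index_eq)
    show "vs ! (Suc k mod n) \<noteq> - (vs ! k)"
      using antipodal that by blast
  qed
  then have "0 \<notin> Ns"
    by (auto simp: Ns_def)
  moreover have "\<forall>x\<in>poly_curve vs. \<exists>N\<in>Ns. x \<bullet> N = 0"
    using sarc_orthogonal_cross by (fastforce simp: poly_curve_def poly_edge_def Ns_def n_def)
  moreover have "finite Ns"
    by (simp add: Ns_def)
  ultimately show ?thesis
    using that by blast
qed

lemma sector_in_disjoint:
  assumes frame: "tangent_frame v e1 e2" and "spherical_polygon S vs" "T \<inter> T' \<subseteq> poly_curve vs"
    and "sector_in T v e1 e2 lo \<theta>" "sector_in T' v e1 e2 lo' \<theta>'" "0 < \<theta>" "0 < \<theta>'"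
  shows "lo + \<theta> \<le> lo' \<or> lo' + \<theta>' \<le> lo"
proof (rule ccontr)
  assume overlap: "\<not> ?thesis"
  obtain Ns where Ns: "finite Ns" "0 \<notin> Ns" "\<forall>x\<in>poly_curve vs. \<exists>N\<in>Ns. x \<bullet> N = 0"
    using spherical_polygon_curve_in_planes[OF assms(2)] by blast
  obtain \<epsilon> \<epsilon>' where "0 < \<epsilon>" "0 < \<epsilon>'"
    and inT: "\<forall>r \<phi>. 0 < r \<and> r < \<epsilon> \<and> lo < \<phi> \<and> \<phi> < lo + \<theta> \<longrightarrow> polar_point v e1 e2 r \<phi> \<in> T"
    and inT': "\<forall>r \<phi>. 0 < r \<and> r < \<epsilon>' \<and> lo' < \<phi> \<and> \<phi> < lo' + \<theta>' \<longrightarrow> polar_point v e1 e2 r \<phi> \<in> T'"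
    using assms(4,5) unfolding sector_in_def by blast
  have "0 < min \<epsilon> \<epsilon>'" "max lo lo' < min (lo + \<theta>) (lo' + \<theta>')"
    using \<open>0 < \<epsilon>\<close> \<open>0 < \<epsilon>'\<close> overlap assms(6,7) by auto
  moreover have "\<forall>r \<phi>. 0 < r \<and> r < min \<epsilon> \<epsilon>' \<and> max lo lo' < \<phi> \<and> \<phi> < min (lo + \<theta>) (lo' + \<theta>') \<longrightarrow>
      (\<exists>N\<in>Ns. polar_point v e1 e2 r \<phi> \<bullet> N = 0)"
  proof (intro allI impI)
    fix r \<phi>
    assume "0 < r \<and> r < min \<epsilon> \<epsilon>' \<and> max lo lo' < \<phi> \<and> \<phi> < min (lo + \<theta>) (lo' + \<theta>')"
    then have "polar_point v e1 e2 r \<phi> \<in> T \<inter> T'"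
      using inT inT' by auto
    then show "\<exists>N\<in>Ns. polar_point v e1 e2 r \<phi> \<bullet> N = 0"
      using assms(3) Ns(3) by blast
  qed
  ultimately show False
    by (rule polar_patch_not_in_planes[OF frame Ns(1,2)])
qed

text \<open>Vertex indices refer to the cyclic vertex list [A, B, D, E, C] of the prototile, so the
  corners 0, ..., 4 carry the angles \<alpha>, \<beta>, \<delta>, \<epsilon>, \<gamma>, and edge k joins corner k to corner k + 1.\<close>

definition pent_angle :: "nat \<Rightarrow> real" where
  "pent_angle k = [pi, 2 * pi / 3, pi / 2, 2 * pi / 3, pi / 2] ! k"

definition pent_edge :: "real \<Rightarrow> real \<Rightarrow> nat \<Rightarrow> real" where
  "pent_edge a b k = [a, a, b, a, a] ! k"

definition next5 :: "nat \<Rightarrow> nat" where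
  "next5 k = (k + 1) mod 5"

definition prev5 :: "nat \<Rightarrow> nat" where
  "prev5 k = (k + 4) mod 5"

lemma less_5_cases:
  assumes "k < (5::nat)"
  obtains "k = 0" | "k = 1" | "k = 2" | "k = 3" | "k = 4"
  using assms by linarith

(* Stated for Suc 0 rather than 1: One_nat_def is a simp rule, so the simplifier never shows
   these rules the numeral 1. *)
lemma next5_prev5 [simp]:
  "next5 k < 5" "prev5 k < 5" "k < 5 \<Longrightarrow> prev5 (next5 k) = k" "k < 5 \<Longrightarrow> next5 (prev5 k) = k"
  "next5 0 = 1" "next5 (Suc 0) = 2" "next5 2 = 3" "next5 3 = 4" "next5 4 = 0"
  "prev5 0 = 4" "prev5 (Suc 0) = 0" "prev5 2 = 1" "prev5 3 = 2" "prev5 4 = 3"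
  by (auto simp: next5_def prev5_def elim: less_5_cases)

lemma next5_prev5_neq: "k < 5 \<Longrightarrow> next5 k \<noteq> k" "k < 5 \<Longrightarrow> prev5 k \<noteq> k" "k < 5 \<Longrightarrow> prev5 k \<noteq> next5 k"
  by (auto simp: next5_def prev5_def elim: less_5_cases)

lemma pent_angle_simps [simp]:
  "pent_angle 0 = pi" "pent_angle (Suc 0) = 2 * pi / 3" "pent_angle 2 = pi / 2"
  "pent_angle 3 = 2 * pi / 3" "pent_angle 4 = pi / 2"
  by (simp_all add: pent_angle_def)

lemma pent_angle_cases:
  assumes "k < 5"
  shows "pent_angle k = pi \<or> pent_angle k = 2 * pi / 3 \<or> pent_angle k = pi / 2"
  using assms by (elim less_5_cases) (simp_all add: pent_angle_def)

lemma pent_angle_bounds: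
  assumes "k < 5"
  shows "pi / 2 \<le> pent_angle k" "pent_angle k \<le> pi"
  using pent_angle_cases[OF assms] pi_gt_zero by (elim disjE; linarith)+

lemma pent_angle_pos: "k < 5 \<Longrightarrow> 0 < pent_angle k"
  using pent_angle_bounds(1) pi_gt_zero by (meson half_gt_zero less_le_trans)

lemma pent_angle_eq_pi:
  assumes "k < 5" "pent_angle k = pi"
  shows "k = 0"
  using assms pi_gt_zero by (elim less_5_cases) (simp_all add: pent_angle_def)

lemma pent_angle_eq_half_pi:
  assumes "k < 5" "pent_angle k = pi / 2"
  shows "k = 2 \<or> k = 4"
  using assms pi_gt_zero by (elim less_5_cases) (simp_all add: pent_angle_def)

lemma edge_to_edge_tilingD:
  assumes "edge_to_edge_tiling f P V"
  shows "\<forall>i<f. spherical_polygon (P i) (V i)"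
    and "\<forall>i<f. \<forall>j<f. i \<noteq> j \<longrightarrow> P i \<inter> P j \<subseteq> poly_curve (V i)"
    and "\<forall>i<f. \<forall>k<length (V i). \<exists>j<f. j \<noteq> i \<and> (\<exists>l<length (V j). poly_edge (V i) k = poly_edge (V j) l)"
    and "\<forall>i<f. \<forall>j<f. \<forall>k<length (V i). \<forall>v\<in>set (V j).
      v \<in> poly_edge (V i) k \<longrightarrow> v = V i ! k \<or> v = V i ! (Suc k mod length (V i))"
    and "\<forall>i<f. \<forall>v\<in>set (V i). 3 \<le> card {j. j < f \<and> v \<in> set (V j)}"
  by (insert assms[unfolded edge_to_edge_tiling_def], (elim conjE, assumption)+)

locale pentagon_tiling =
  fixes P :: "nat \<Rightarrow> (real^3) set" and V :: "nat \<Rightarrow> (real^3) list"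
    and A B C D E :: "real^3" and a b :: real
  assumes tiling: "edge_to_edge_tiling 12 P V"
    and V0: "V 0 = [A, B, D, E, C]"
    and prototile: "a4b_pentagon (P 0) A B C D E a b pi (2 * pi / 3) (pi / 2) (pi / 2) (2 * pi / 3)"
    and congruent: "\<forall>i<12. \<exists>g. orthogonal_transformation g \<and> P i = g ` P 0 \<and> V i = map g (V 0)"
begin

definition neighbours :: "nat \<Rightarrow> nat \<Rightarrow> (real^3) set" where
  "neighbours m k = {V m ! prev5 k, V m ! next5 k}"

lemma tile_congruent_map:
  assumes "i < 12"
  obtains g where "orthogonal_transformation g" "P i = g ` P 0" "V i = map g (V 0)"
  using congruent assms by blast

lemma length_V:
  assumes "i < 12"
  shows "length (V i) = 5"
proof -
  obtain g where "orthogonal_transformation g" "P i = g ` P 0" "V i = map g (V 0)"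
    by (rule tile_congruent_map[OF assms])
  then show ?thesis
    by (simp add: V0)
qed

lemma spherical_polygon_tile: "i < 12 \<Longrightarrow> spherical_polygon (P i) (V i)"
  using edge_to_edge_tilingD(1)[OF tiling] by blast

lemma tiles_meet_on_boundary: "i < 12 \<Longrightarrow> j < 12 \<Longrightarrow> i \<noteq> j \<Longrightarrow> P i \<inter> P j \<subseteq> poly_curve (V i)"
  using edge_to_edge_tilingD(2)[OF tiling] by blast

lemma vertex_norm:
  assumes "i < 12" "k < 5"
  shows "norm (V i ! k) = 1"
proof -
  have "set (V i) \<subseteq> sphere 0 1"
    using spherical_polygonD(2)[OF spherical_polygon_tile[OF assms(1)]] .
  then show ?thesis
    using nth_mem[of k "V i"] length_V[OF assms(1)] assms(2) by (auto simp: subset_iff)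
qed

lemma vertex_eq_iff:
  assumes "i < 12" "k < 5" "l < 5"
  shows "V i ! k = V i ! l \<longleftrightarrow> k = l"
proof -
  have "distinct (V i)"
    using spherical_polygonD(3)[OF spherical_polygon_tile[OF assms(1)]] .
  then show ?thesis
    using nth_eq_iff_index_eq[of "V i" k l] length_V[OF assms(1)] assms(2,3) by auto
qed

lemma neighbour_vertex:
  assumes "i < 12" "k < 5" "u \<in> neighbours i k"
  shows "norm u = 1" "u \<noteq> V i ! k" "u \<noteq> - (V i ! k)"
proof -
  have not_antipodal: "V i ! next5 l \<noteq> - (V i ! l)" if "l < 5" for l
    using spherical_polygonD(4)[OF spherical_polygon_tile[OF assms(1)]] length_V[OF assms(1)] that
    by (simp add: next5_def)
  have not_self: "V i ! l \<noteq> V i ! k" if "l < 5" "l \<noteq> k" for l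
    using vertex_eq_iff[OF assms(1) that(1) assms(2)] that(2) by simp
  have u: "u = V i ! prev5 k \<or> u = V i ! next5 k"
    using assms(3) by (simp add: neighbours_def)
  then show "norm u = 1"
    using assms(1,2) vertex_norm by auto
  show "u \<noteq> V i ! k"
    using u not_self[of "prev5 k"] not_self[of "next5 k"] next5_prev5_neq[OF assms(2)] by auto
  show "u \<noteq> - (V i ! k)"
  proof
    assume minus: "u = - (V i ! k)"
    have "V i ! k \<noteq> - (V i ! prev5 k)"
      using not_antipodal[of "prev5 k"] assms(2) by simp
    then show False
      using u minus not_antipodal[OF assms(2)] assms(2) by (metis minus_minus)
  qed
qed

lemma tile_interior_angle:
  assumes "i < 12" "k < 5"
  shows "interior_angle (P i) (V i ! prev5 k) (V i ! k) (V i ! next5 k) (pent_angle k)"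
proof -
  have "interior_angle (P 0) (V 0 ! prev5 k) (V 0 ! k) (V 0 ! next5 k) (pent_angle k)"
    using prototile assms(2)
    by (elim less_5_cases) (simp_all add: a4b_pentagon_def V0 pent_angle_def next5_def prev5_def)
  moreover obtain g where "orthogonal_transformation g" "P i = g ` P 0" "V i = map g (V 0)"
    by (rule tile_congruent_map[OF assms(1)])
  ultimately show ?thesis
    using interior_angle_orthogonal_transformation assms(2) length_V[of 0] by simp
qed

lemma tile_edge_length:
  assumes "i < 12" "k < 5"
  shows "sdist (V i ! k) (V i ! next5 k) = pent_edge a b k"
    and "sdist (V i ! k) (V i ! prev5 k) = pent_edge a b (prev5 k)"
proof -
  have sdist_sym: "sdist p q = sdist q p" for p q
    by (simp add: sdist_def inner_commute)
  have prototile_edge: "sdist (V 0 ! l) (V 0 ! next5 l) = pent_edge a b l" if "l < 5" for l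
    using prototile that
    by (elim less_5_cases) (simp_all add: a4b_pentagon_def V0 pent_edge_def next5_def sdist_sym)
  obtain g where "orthogonal_transformation g" "P i = g ` P 0" "V i = map g (V 0)"
    by (rule tile_congruent_map[OF assms(1)])
  then have edge: "sdist (V i ! l) (V i ! next5 l) = pent_edge a b l" if "l < 5" for l
    using prototile_edge that sdist_orthogonal_transformation length_V[of 0] by simp
  show "sdist (V i ! k) (V i ! next5 k) = pent_edge a b k"
    using edge assms(2) .
  show "sdist (V i ! k) (V i ! prev5 k) = pent_edge a b (prev5 k)"
    using edge[of "prev5 k"] assms(2) sdist_sym by simp
qed

lemma a_ne_b: "a \<noteq> b"
  using prototile by (simp add: a4b_pentagon_def)

end

lemma endpoints_in_sarc:
  assumes "p \<in> sphere 0 1" "q \<in> sphere 0 1"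
  shows "p \<in> sarc p q" "q \<in> sarc p q"
  using assms unfolding sarc_def Let_def
  by (force intro: image_eqI[of _ _ 0], force intro: image_eqI[of _ _ 1])

lemma doubleton_eq_if_mem: "x \<in> {a, b} \<Longrightarrow> y \<in> {a, b} \<Longrightarrow> x \<noteq> y \<Longrightarrow> {x, y} = {a, b}"
  by auto

context pentagon_tiling
begin

lemma poly_edge_V: "m < 12 \<Longrightarrow> poly_edge (V m) l = sarc (V m ! l) (V m ! next5 l)"
  using length_V by (simp add: poly_edge_def next5_def)

lemma shared_edge:
  assumes "i < 12" "k < 5"
  obtains j l where "j < 12" "j \<noteq> i" "l < 5" "{V j ! l, V j ! next5 l} = {V i ! k, V i ! next5 k}"
proof -
  have "\<exists>j<12. j \<noteq> i \<and> (\<exists>l<length (V j). poly_edge (V i) k = poly_edge (V j) l)"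
    using edge_to_edge_tilingD(3)[OF tiling] assms length_V[OF assms(1)] by simp
  then obtain j l where j: "j < 12" "j \<noteq> i" "l < 5" and same: "poly_edge (V i) k = poly_edge (V j) l"
    using length_V by auto
  have on_edge: "v \<in> {V i ! k, V i ! next5 k}" if "v \<in> set (V j)" "v \<in> poly_edge (V i) k" for v
    using edge_to_edge_tilingD(4)[OF tiling, rule_format, of i j k v] assms j(1) that length_V[OF assms(1)]
    by (auto simp: next5_def)
  have "V j ! l \<in> poly_edge (V i) k" "V j ! next5 l \<in> poly_edge (V i) k"
    using endpoints_in_sarc[of "V j ! l" "V j ! next5 l"] vertex_norm[OF j(1)] j(3)
    by (simp_all add: same poly_edge_V[OF j(1)])
  then have "V j ! l \<in> {V i ! k, V i ! next5 k}" "V j ! next5 l \<in> {V i ! k, V i ! next5 k}"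
    using on_edge length_V[OF j(1)] j(3) by simp_all
  moreover have "V j ! l \<noteq> V j ! next5 l"
    using vertex_eq_iff[OF j(1) j(3)] next5_prev5_neq(1)[OF j(3)] by simp
  ultimately have "{V j ! l, V j ! next5 l} = {V i ! k, V i ! next5 k}"
    using j(3) by auto
  then show ?thesis
    using that j by blast
qed

lemma tile_across_edge:
  assumes "i < 12" "k < 5" "u \<in> neighbours i k"
  obtains j k' where "j < 12" "j \<noteq> i" "k' < 5" "V j ! k' = V i ! k" "u \<in> neighbours j k'"
proof -
  obtain l where "l < 5" "{V i ! l, V i ! next5 l} = {V i ! k, u}"
  proof (cases "u = V i ! next5 k")
    case True
    then show ?thesis
      using that assms(2) by blast
  next
    case False
    then have "u = V i ! prev5 k"
      using assms(3) by (simp add: neighbours_def)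
    then show ?thesis
      using that[of "prev5 k"] assms(2) by (simp add: insert_commute)
  qed
  then obtain j l' where j: "j < 12" "j \<noteq> i" "l' < 5" "{V j ! l', V j ! next5 l'} = {V i ! k, u}"
    using shared_edge[OF assms(1)] by (metis (no_types))
  then consider "V j ! l' = V i ! k" "V j ! next5 l' = u" | "V j ! next5 l' = V i ! k" "V j ! l' = u"
    by (auto simp: doubleton_eq_iff)
  then show ?thesis
  proof cases
    case 1
    then show ?thesis
      using that[of j l'] j by (simp add: neighbours_def)
  next
    case 2
    then show ?thesis
      using that[of j "next5 l'"] j by (simp add: neighbours_def)
  qed
qed

lemma third_tile_at_vertex:
  assumes "i < 12" "v \<in> set (V i)"
  obtains r where "r < 12" "r \<noteq> i" "r \<noteq> j" "v \<in> set (V r)"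
proof -
  have "3 \<le> card {m. m < 12 \<and> v \<in> set (V m)}"
    using edge_to_edge_tilingD(5)[OF tiling] assms by blast
  moreover have "card {i, j} \<le> 2"
    by (simp add: card_insert_if)
  ultimately have "\<not> {m. m < 12 \<and> v \<in> set (V m)} \<subseteq> {i, j}"
    using card_mono[of "{i, j}" "{m. m < 12 \<and> v \<in> set (V m)}"] by auto
  then show ?thesis
    using that by blast
qed

lemma tile_sectors_disjoint:
  assumes "tangent_frame v e1 e2" "i < 12" "j < 12" "i \<noteq> j"
    and "sector_in (P i) v e1 e2 lo \<theta>" "sector_in (P j) v e1 e2 lo' \<theta>'" "0 < \<theta>" "0 < \<theta>'"
  shows "lo + \<theta> \<le> lo' \<or> lo' + \<theta>' \<le> lo"
  by (rule sector_in_disjoint[OF assms(1) spherical_polygon_tile[OF assms(2)]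
        tiles_meet_on_boundary[OF assms(2-4)] assms(5-8)])

lemma right_angle_other_edge:
  assumes "m < 12" "k < 5" "pent_angle k = pi / 2" "{x, y} = neighbours m k" "sdist (V m ! k) x = a"
  shows "sdist (V m ! k) y = (if k = 4 then a else b) \<and> (k = 2 \<longrightarrow> x = V m ! 1)"
proof -
  have "V m ! prev5 k \<noteq> V m ! next5 k"
    using vertex_eq_iff[OF assms(1)] next5_prev5_neq(3)[OF assms(2)] by simp
  then have xy: "x = V m ! prev5 k \<and> y = V m ! next5 k \<or> x = V m ! next5 k \<and> y = V m ! prev5 k"
    using assms(4) by (auto simp: neighbours_def doubleton_eq_iff)
  note lengths = tile_edge_length[OF assms(1,2)]
  consider "k = 2" | "k = 4"
    using pent_angle_eq_half_pi[OF assms(2,3)] by blast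
  then show ?thesis
  proof cases
    case 1
    then show ?thesis
      using xy lengths assms(5) a_ne_b by (auto simp: pent_edge_def)
  next
    case 2
    then show ?thesis
      using xy lengths by (auto simp: pent_edge_def)
  qed
qed

end

section \<open>The neighbourhood of a vertex\<close>

locale vertex_chart = pentagon_tiling +
  fixes t kt :: nat and e1 e2 :: "real^3"
  assumes tile: "t < 12" and corner: "kt < 5"
    and frame: "tangent_frame (V t ! kt) e1 e2"
    and dir_prev: "frame_dir e1 e2 0 = tangent_dir (V t ! kt) (V t ! prev5 kt)"
    and dir_next: "frame_dir e1 e2 (pent_angle kt) = tangent_dir (V t ! kt) (V t ! next5 kt)"
    and own_sector: "sector_in (P t) (V t ! kt) e1 e2 0 (pent_angle kt)"

lemma (in pentagon_tiling) vertex_chart_exists: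
  assumes "t < 12" "kt < 5"
  obtains e1 e2 where "vertex_chart P V A B C D E a b t kt e1 e2"
proof -
  obtain e2 where "tangent_frame (V t ! kt) (tangent_dir (V t ! kt) (V t ! prev5 kt)) e2"
    "frame_dir (tangent_dir (V t ! kt) (V t ! prev5 kt)) e2 (pent_angle kt) = tangent_dir (V t ! kt) (V t ! next5 kt)"
    "sector_in (P t) (V t ! kt) (tangent_dir (V t ! kt) (V t ! prev5 kt)) e2 0 (pent_angle kt)"
    using interior_angle_frame[OF tile_interior_angle[OF assms] vertex_norm[OF assms]]
      neighbour_vertex[OF assms, of "V t ! prev5 kt"] by (auto simp: neighbours_def)
  then have "vertex_chart P V A B C D E a b t kt (tangent_dir (V t ! kt) (V t ! prev5 kt)) e2"
    using assms by unfold_locales (simp_all add: frame_dir_def)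
  then show ?thesis
    using that by blast
qed

context vertex_chart
begin

abbreviation centre :: "real^3" where
  "centre \<equiv> V t ! kt"

text \<open>Tile m, with its corner k at the centre, covers the directions from lo to
  lo + pent_angle k around the centre; these lie in the range left free by tile t.\<close>

definition occupies :: "nat \<Rightarrow> nat \<Rightarrow> real \<Rightarrow> bool" where
  "occupies m k lo \<longleftrightarrow> m < 12 \<and> k < 5 \<and> V m ! k = centre \<and>
     pent_angle kt \<le> lo \<and> lo + pent_angle k \<le> 2 * pi \<and> sector_in (P m) centre e1 e2 lo (pent_angle k) \<and>
     {frame_dir e1 e2 lo, frame_dir e1 e2 (lo + pent_angle k)} = tangent_dir centre ` neighbours m k"

lemma frame_dir_2pi: "frame_dir e1 e2 (2 * pi) = tangent_dir centre (V t ! prev5 kt)"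
  using frame_dir_add_2pi[of e1 e2 0 1] dir_prev by simp

lemma occupies_exists:
  assumes "m < 12" "m \<noteq> t" "k < 5" "V m ! k = centre"
  obtains lo where "occupies m k lo"
proof -
  have angles: "0 < pent_angle k" "0 < pent_angle kt"
    using pent_angle_pos assms(3) corner by auto
  obtain lo0 where bd0: "{frame_dir e1 e2 lo0, frame_dir e1 e2 (lo0 + pent_angle k)} =
      tangent_dir centre ` neighbours m k" and sector0: "sector_in (P m) centre e1 e2 lo0 (pent_angle k)"
    using interior_angle_sector[OF tile_interior_angle[OF assms(1,3)], unfolded assms(4), OF frame]
      neighbour_vertex[OF assms(1,3), of "V m ! prev5 k"] assms(4)
    by (auto simp: neighbours_def)
  define n where "n = \<lfloor>lo0 / (2 * pi)\<rfloor>"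
  define lo where "lo = lo0 + 2 * pi * of_int (- n)"
  have "of_int n \<le> lo0 / (2 * pi)" "lo0 / (2 * pi) < of_int n + 1"
    unfolding n_def by linarith+
  then have lo: "0 \<le> lo" "lo < 2 * pi"
    using pi_gt_zero by (simp_all add: lo_def field_simps)
  have sector: "sector_in (P m) centre e1 e2 lo (pent_angle k)"
    unfolding lo_def by (rule sector_in_shift[OF sector0])
  have "frame_dir e1 e2 (lo + pent_angle k) = frame_dir e1 e2 (lo0 + pent_angle k)"
    using frame_dir_add_2pi[of e1 e2 "lo0 + pent_angle k" "- n"] by (simp add: lo_def algebra_simps)
  then have bd: "{frame_dir e1 e2 lo, frame_dir e1 e2 (lo + pent_angle k)} = tangent_dir centre ` neighbours m k"
    using bd0 frame_dir_add_2pi[of e1 e2 lo0 "- n"] by (simp add: lo_def)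
  have "lo + pent_angle k \<le> 0 \<or> pent_angle kt \<le> lo"
    using tile_sectors_disjoint[OF frame assms(1) tile assms(2) sector own_sector angles] by simp
  moreover have "sector_in (P m) centre e1 e2 (lo - 2 * pi) (pent_angle k)"
    using sector_in_shift[OF sector, of "-1"] by simp
  then have "lo - 2 * pi + pent_angle k \<le> 0 \<or> pent_angle kt \<le> lo - 2 * pi"
    using tile_sectors_disjoint[OF frame assms(1) tile assms(2) _ own_sector angles] by simp
  ultimately have "pent_angle kt \<le> lo" "lo + pent_angle k \<le> 2 * pi"
    using lo angles by linarith+
  then show ?thesis
    using that assms sector bd by (simp add: occupies_def)
qed

lemma occupiesD:
  assumes "occupies m k lo"
  shows "m < 12" "k < 5" "V m ! k = centre" "pent_angle kt \<le> lo" "lo + pent_angle k \<le> 2 * pi"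
    "sector_in (P m) centre e1 e2 lo (pent_angle k)"
    "{frame_dir e1 e2 lo, frame_dir e1 e2 (lo + pent_angle k)} = tangent_dir centre ` neighbours m k"
  using assms by (simp_all add: occupies_def)

lemma occupies_disjoint:
  assumes "occupies m k lo" "occupies m' k' lo'" "m \<noteq> m'"
  shows "lo + pent_angle k \<le> lo' \<or> lo' + pent_angle k' \<le> lo"
  using tile_sectors_disjoint[OF frame occupiesD(1)[OF assms(1)] occupiesD(1)[OF assms(2)] assms(3)
      occupiesD(6)[OF assms(1)] occupiesD(6)[OF assms(2)]]
    pent_angle_bounds occupiesD(2)[OF assms(1)] occupiesD(2)[OF assms(2)] pi_gt_zero
  by force

lemma dir_eq_imp_eq: "frame_dir e1 e2 x = frame_dir e1 e2 y \<Longrightarrow> \<bar>x - y\<bar> < 2 * pi \<Longrightarrow> x = y"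
  by (rule frame_dir_eq_imp_eq[OF frame])

lemma occupies_unique:
  assumes "occupies m k lo" "occupies m k' lo'"
  shows "k' = k" "lo' = lo"
proof -
  show "k' = k"
    using occupiesD(1-3)[OF assms(1)] occupiesD(1-3)[OF assms(2)] vertex_eq_iff by metis
  then have "{frame_dir e1 e2 lo', frame_dir e1 e2 (lo' + pent_angle k)} =
      {frame_dir e1 e2 lo, frame_dir e1 e2 (lo + pent_angle k)}"
    using occupiesD(7)[OF assms(1)] occupiesD(7)[OF assms(2)] by simp
  moreover have "0 < pent_angle kt" "0 < pent_angle k"
    using pent_angle_pos corner occupiesD(2)[OF assms(1)] by blast+
  moreover have "\<bar>lo' - lo\<bar> < 2 * pi" "\<bar>lo' - (lo + pent_angle k)\<bar> < 2 * pi"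
    "\<bar>lo' + pent_angle k - lo\<bar> < 2 * pi"
    using occupiesD(4,5)[OF assms(1)] occupiesD(4,5)[OF assms(2)] \<open>k' = k\<close> calculation(2,3)
    by (auto simp: abs_less_iff)
  ultimately show "lo' = lo"
    by (auto simp: doubleton_eq_iff dest!: dir_eq_imp_eq)
qed

lemma occupies_boundary:
  assumes "occupies m k lo" "u \<in> neighbours m k" "tangent_dir centre u = frame_dir e1 e2 c"
    "0 < c" "c \<le> 2 * pi"
  shows "c = lo \<or> c = lo + pent_angle k"
proof -
  have "frame_dir e1 e2 c \<in> {frame_dir e1 e2 lo, frame_dir e1 e2 (lo + pent_angle k)}"
    using occupiesD(7)[OF assms(1)] assms(2,3) by (metis image_eqI)
  moreover have "0 < pent_angle kt"
    using pent_angle_pos corner by blast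
  moreover have "\<bar>c - lo\<bar> < 2 * pi" "\<bar>c - (lo + pent_angle k)\<bar> < 2 * pi"
    using occupiesD(4,5)[OF assms(1)] assms(4,5) pent_angle_bounds[OF occupiesD(2)[OF assms(1)]]
      calculation(2) pi_gt_zero by (auto simp: abs_less_iff)
  ultimately show ?thesis
    by (auto dest!: dir_eq_imp_eq)
qed

lemma tile_after_own:
  obtains m k where "m \<noteq> t" "occupies m k (pent_angle kt)" "V t ! next5 kt \<in> neighbours m k"
proof -
  have "V t ! next5 kt \<in> neighbours t kt"
    by (simp add: neighbours_def)
  then obtain m k where m: "m < 12" "m \<noteq> t" "k < 5" "V m ! k = centre" "V t ! next5 kt \<in> neighbours m k"
    by (rule tile_across_edge[OF tile corner])
  obtain lo where lo: "occupies m k lo"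
    using occupies_exists[OF m(1-4)] by blast
  have "pent_angle kt = lo \<or> pent_angle kt = lo + pent_angle k"
    using occupies_boundary[OF lo m(5) dir_next[symmetric]] pent_angle_bounds[OF corner] pi_gt_zero
    by (simp add: field_simps)
  then have "lo = pent_angle kt"
    using occupiesD(4)[OF lo] pent_angle_bounds[OF m(3)] pi_gt_zero by auto
  then show ?thesis
    using that m lo by blast
qed

lemma tile_before_own:
  obtains m k lo where "m \<noteq> t" "occupies m k lo" "lo + pent_angle k = 2 * pi"
    "V t ! prev5 kt \<in> neighbours m k"
proof -
  have "V t ! prev5 kt \<in> neighbours t kt"
    by (simp add: neighbours_def)
  then obtain m k where m: "m < 12" "m \<noteq> t" "k < 5" "V m ! k = centre" "V t ! prev5 kt \<in> neighbours m k"
    by (rule tile_across_edge[OF tile corner])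
  obtain lo where lo: "occupies m k lo"
    using occupies_exists[OF m(1-4)] by blast
  have "2 * pi = lo \<or> 2 * pi = lo + pent_angle k"
    using occupies_boundary[OF lo m(5) frame_dir_2pi[symmetric]] pi_gt_zero by simp
  then have "lo + pent_angle k = 2 * pi"
    using occupiesD(5)[OF lo] pent_angle_bounds[OF m(3)] pi_gt_zero by auto
  then show ?thesis
    using that m lo by blast
qed

lemma own_neighbour_dir:
  assumes "u \<in> neighbours t kt" "tangent_dir centre u = frame_dir e1 e2 x" "pent_angle kt < x" "x < 2 * pi"
  shows False
proof -
  have "frame_dir e1 e2 x = frame_dir e1 e2 0 \<or> frame_dir e1 e2 x = frame_dir e1 e2 (pent_angle kt)"
    using assms(1,2) dir_prev dir_next by (auto simp: neighbours_def)
  moreover have "0 < pent_angle kt" "pent_angle kt \<le> pi"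
    using pent_angle_bounds[OF corner] pi_gt_zero by linarith+
  then have "\<bar>x - 0\<bar> < 2 * pi" "\<bar>x - pent_angle kt\<bar> < 2 * pi"
    using assms(3,4) by (auto simp: abs_less_iff)
  ultimately have "x = 0 \<or> x = pent_angle kt"
    using dir_eq_imp_eq[of x 0] dir_eq_imp_eq[of x "pent_angle kt"] by blast
  then show False
    using assms(3) \<open>0 < pent_angle kt\<close> by auto
qed

lemma tile_after:
  assumes "occupies m k lo" "u \<in> neighbours m k"
    and "tangent_dir centre u = frame_dir e1 e2 (lo + pent_angle k)" "lo + pent_angle k < 2 * pi"
  obtains m' k' where "m' \<noteq> m" "occupies m' k' (lo + pent_angle k)" "u \<in> neighbours m' k'"
proof -
  define x where "x = lo + pent_angle k"
  have "pi / 2 \<le> pent_angle k" "pi / 2 \<le> pent_angle kt" "pent_angle kt \<le> pi"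
    using pent_angle_bounds occupiesD(2)[OF assms(1)] corner by auto
  then have x: "pent_angle kt < x" "x < 2 * pi" "0 < pent_angle kt"
    using occupiesD(4)[OF assms(1)] assms(4) pi_gt_zero by (simp_all add: x_def)
  obtain m' k' where m': "m' < 12" "m' \<noteq> m" "k' < 5" "V m' ! k' = V m ! k" "u \<in> neighbours m' k'"
    by (rule tile_across_edge[OF occupiesD(1,2)[OF assms(1)] assms(2)])
  have "m' \<noteq> t"
  proof
    assume "m' = t"
    then have "k' = kt"
      using vertex_eq_iff[OF tile m'(3) corner] m'(4) occupiesD(3)[OF assms(1)] by simp
    then show False
      using own_neighbour_dir[OF _ assms(3)[folded x_def] x(1,2)] m'(5) \<open>m' = t\<close> by simp
  qed
  have "V m' ! k' = centre"
    using m'(4) occupiesD(3)[OF assms(1)] by simp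
  then obtain lo' where lo': "occupies m' k' lo'"
    using occupies_exists[OF m'(1) \<open>m' \<noteq> t\<close> m'(3)] by blast
  have "x = lo' \<or> x = lo' + pent_angle k'"
    using occupies_boundary[OF lo' m'(5) assms(3)] x by (simp add: x_def)
  moreover have "x \<le> lo' \<or> lo' + pent_angle k' \<le> lo"
    using occupies_disjoint[OF assms(1) lo'] m'(2) by (simp add: x_def)
  moreover have "0 < pent_angle k'" "0 < pent_angle k"
    using pent_angle_pos m'(3) occupiesD(2)[OF assms(1)] by blast+
  ultimately have "lo' = x"
    by (auto simp: x_def)
  then show ?thesis
    using that m'(2,5) lo' by (simp add: x_def)
qed

lemma gap_after:
  assumes "occupies m k lo" "lo + pent_angle k < 2 * pi"
  shows "2 * pi - (lo + pent_angle k) \<in> pent_angle ` {..<5} \<or> pi \<le> 2 * pi - (lo + pent_angle k)"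
proof -
  have "frame_dir e1 e2 (lo + pent_angle k) \<in> tangent_dir centre ` neighbours m k"
    using occupiesD(7)[OF assms(1)] by blast
  then obtain u where u: "u \<in> neighbours m k" "tangent_dir centre u = frame_dir e1 e2 (lo + pent_angle k)"
    by auto
  obtain r kr where r: "occupies r kr (lo + pent_angle k)"
    using tile_after[OF assms(1) u assms(2)] by blast
  obtain s ks ls where s: "occupies s ks ls" "ls + pent_angle ks = 2 * pi"
    using tile_before_own by blast
  show ?thesis
  proof (cases "r = s")
    case True
    then have "ks = kr" "ls = lo + pent_angle k"
      using occupies_unique[OF r] s(1) by simp_all
    then have "2 * pi - (lo + pent_angle k) = pent_angle kr"
      using s(2) by simp
    then show ?thesis
      using occupiesD(2)[OF r] by blast
  next
    case False
    then have "lo + pent_angle k + pent_angle kr \<le> ls"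
      using occupies_disjoint[OF r s(1)] s(2) assms(2) by auto
    then show ?thesis
      using s(2) pent_angle_bounds[OF occupiesD(2)[OF r]] pent_angle_bounds[OF occupiesD(2)[OF s(1)]]
      by linarith
  qed
qed

end

section \<open>The vertices of angle \<alpha>\<close>

lemma (in pentagon_tiling) no_delta_at_alpha_with_beta_at_gamma:
  assumes "t < 12" "q < 12" "V q ! 2 = V t ! 0" "V q ! 1 = V t ! 4"
  shows False
proof -
  obtain e1 e2 where "vertex_chart P V A B C D E a b t 4 e1 e2"
    by (rule vertex_chart_exists[OF assms(1), of 4]) simp_all
  then interpret vertex_chart P V A B C D E a b t 4 e1 e2 .
  have "q \<noteq> t"
    using assms(3) vertex_eq_iff[OF assms(1), of 2 0] by auto
  then obtain lo where lo: "occupies q 1 lo"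
    by (rule occupies_exists[OF assms(2), of 1]) (use assms(4) in simp_all)
  have "V t ! 0 \<in> neighbours q 1" "tangent_dir centre (V t ! 0) = frame_dir e1 e2 (pi / 2)"
    using assms(3) dir_next by (simp_all add: neighbours_def)
  then have "lo = pi / 2"
    using occupies_boundary[OF lo] occupiesD(4)[OF lo] pi_gt_zero by fastforce
  then have "lo + pent_angle 1 = 7 * pi / 6"
    by simp
  then have gap: "2 * pi - (lo + pent_angle 1) = 5 * pi / 6" "lo + pent_angle 1 < 2 * pi"
    using pi_gt_zero by linarith+
  have "5 * pi / 6 \<in> pent_angle ` {..<5} \<or> pi \<le> 5 * pi / 6"
    using gap_after[OF lo gap(2)] unfolding gap(1) .
  then show False
  proof
    assume "5 * pi / 6 \<in> pent_angle ` {..<5}"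
    then obtain k where "k < 5" "pent_angle k = 5 * pi / 6"
      by auto
    then show False
      using pent_angle_cases[of k] pi_gt_zero by auto
  next
    assume "pi \<le> 5 * pi / 6"
    then show False
      using pi_gt_zero by linarith
  qed
qed

context vertex_chart
begin

lemma alpha_chart_no_other_alpha:
  assumes "kt = 0" "m < 12" "m \<noteq> t"
  shows "V m ! 0 \<noteq> centre"
proof
  assume "V m ! 0 = centre"
  moreover have "(0::nat) < 5"
    by simp
  ultimately obtain lo where lo: "occupies m 0 lo"
    using occupies_exists[OF assms(2,3)] by blast
  then have "lo = pi"
    using occupiesD(4,5)[OF lo] assms(1) by simp
  have "centre \<in> set (V t)"
    using corner length_V[OF tile] by simp
  then obtain r where r: "r < 12" "r \<noteq> t" "r \<noteq> m" "centre \<in> set (V r)"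
    by (rule third_tile_at_vertex[OF tile])
  then obtain kr where kr: "kr < 5" "V r ! kr = centre"
    using length_V by (metis in_set_conv_nth)
  then obtain lr where lr: "occupies r kr lr"
    using occupies_exists r(1,2) by blast
  then show False
    using occupies_disjoint[OF lr lo] r(3) occupiesD(4,5)[OF lr] \<open>lo = pi\<close> assms(1)
      pent_angle_bounds[OF kr(1)] pi_gt_zero by auto
qed

lemma alpha_chart_right_angles:
  assumes "kt = 0"
  obtains p q kp kq where "p \<noteq> q" "occupies p kp pi" "occupies q kq (3 * pi / 2)"
    "pent_angle kp = pi / 2" "pent_angle kq = pi / 2"
    "V t ! next5 kt \<in> neighbours p kp" "V t ! prev5 kt \<in> neighbours q kq"
proof -
  have "pent_angle kt = pi"
    using assms by simp
  obtain p kp where p: "p \<noteq> t" "occupies p kp (pent_angle kt)" "V t ! next5 kt \<in> neighbours p kp"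
    by (rule tile_after_own)
  obtain q kq lq where q: "q \<noteq> t" "occupies q kq lq" "lq + pent_angle kq = 2 * pi"
    "V t ! prev5 kt \<in> neighbours q kq"
    by (rule tile_before_own)
  have "p \<noteq> q"
  proof
    assume "p = q"
    then have "occupies p kq lq"
      using q(2) by simp
    then have "pent_angle kp = pi"
      using occupies_unique[OF p(2) \<open>occupies p kq lq\<close>] q(3) \<open>pent_angle kt = pi\<close> by simp
    then have "V p ! 0 = centre"
      using pent_angle_eq_pi occupiesD(2,3)[OF p(2)] by blast
    then show False
      using alpha_chart_no_other_alpha[OF assms occupiesD(1)[OF p(2)] p(1)] by blast
  qed
  then have "pi + pent_angle kp \<le> lq"
    using occupies_disjoint[OF p(2) q(2)] q(3) \<open>pent_angle kt = pi\<close> pi_gt_zero by auto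
  then have "pent_angle kp = pi / 2" "pent_angle kq = pi / 2" "lq = 3 * pi / 2"
    using q(3) pent_angle_bounds[OF occupiesD(2)[OF p(2)]] pent_angle_bounds[OF occupiesD(2)[OF q(2)]]
    by linarith+
  moreover have "occupies p kp pi" "occupies q kq (3 * pi / 2)"
    using p(2) q(2) \<open>pent_angle kt = pi\<close> \<open>lq = 3 * pi / 2\<close> by simp_all
  ultimately show ?thesis
    using that \<open>p \<noteq> q\<close> p(3) q(4) by blast
qed

lemma alpha_chart_common_neighbour:
  assumes "kt = 0" "occupies p kp pi" "occupies q kq (3 * pi / 2)" "pent_angle kp = pi / 2"
    "V t ! next5 kt \<in> neighbours p kp" "V t ! prev5 kt \<in> neighbours q kq"
  obtains u where "{V t ! next5 kt, u} = neighbours p kp" "{V t ! prev5 kt, u} = neighbours q kq"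
proof -
  have "frame_dir e1 e2 (pi + pent_angle kp) \<in> tangent_dir centre ` neighbours p kp"
    using occupiesD(7)[OF assms(2)] by blast
  then obtain u where u: "u \<in> neighbours p kp" "tangent_dir centre u = frame_dir e1 e2 (pi + pent_angle kp)"
    by auto
  have "pi + pent_angle kp < 2 * pi"
    using assms(4) pi_gt_zero by linarith
  then obtain r kr where r: "r \<noteq> p" "occupies r kr (pi + pent_angle kp)" "u \<in> neighbours r kr"
    using tile_after[OF assms(2) u] by blast
  have "0 < pent_angle kr" "0 < pent_angle kq"
    using pent_angle_pos occupiesD(2)[OF r(2)] occupiesD(2)[OF assms(3)] by blast+
  then have "r = q"
    using occupies_disjoint[OF r(2) assms(3)] assms(4) by (cases "r = q") auto
  then have "u \<in> neighbours q kq"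
    using r(3) occupies_unique(1)[OF r(2)] assms(3) by auto
  have "tangent_dir centre (V t ! next5 kt) = frame_dir e1 e2 pi"
    "tangent_dir centre (V t ! prev5 kt) = frame_dir e1 e2 (2 * pi)"
    "tangent_dir centre u = frame_dir e1 e2 (3 * pi / 2)"
    using dir_next frame_dir_2pi u(2) assms(1,4) by simp_all
  then have "u \<noteq> V t ! next5 kt" "u \<noteq> V t ! prev5 kt"
    using dir_eq_imp_eq[of "3 * pi / 2" pi] dir_eq_imp_eq[of "3 * pi / 2" "2 * pi"] pi_gt_zero by auto
  then show ?thesis
    using that[of u] doubleton_eq_if_mem u(1) \<open>u \<in> neighbours q kq\<close> assms(5,6)
    unfolding neighbours_def by metis
qed

lemma alpha_chart_gammas:
  assumes "kt = 0" "occupies p kp pi" "occupies q kq (3 * pi / 2)"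
    "pent_angle kp = pi / 2" "pent_angle kq = pi / 2"
    "V t ! next5 kt \<in> neighbours p kp" "V t ! prev5 kt \<in> neighbours q kq"
  shows "kp = 4" "kq = 4"
proof -
  obtain u where u: "{V t ! next5 kt, u} = neighbours p kp" "{V t ! prev5 kt, u} = neighbours q kq"
    using alpha_chart_common_neighbour[OF assms(1-4,6,7)] by blast
  have centre: "V p ! kp = centre" "V q ! kq = centre"
    using occupiesD(3)[OF assms(2)] occupiesD(3)[OF assms(3)] by simp_all
  have "sdist (V p ! kp) (V t ! next5 kt) = a" "sdist (V q ! kq) (V t ! prev5 kt) = a"
    using tile_edge_length[OF tile corner] assms(1) centre by (simp_all add: pent_edge_def)
  note p_edge = right_angle_other_edge[OF occupiesD(1,2)[OF assms(2)] assms(4) u(1) this(1)]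
   and q_edge = right_angle_other_edge[OF occupiesD(1,2)[OF assms(3)] assms(5) u(2) this(2)]
  have kp: "kp = 2 \<or> kp = 4" and kq: "kq = 2 \<or> kq = 4"
    using pent_angle_eq_half_pi[OF occupiesD(2)[OF assms(2)] assms(4)]
      pent_angle_eq_half_pi[OF occupiesD(2)[OF assms(3)] assms(5)] by simp_all
  have "(if kp = 4 then a else b) = (if kq = 4 then a else b)"
    using p_edge q_edge centre by simp
  then have "kp = kq"
    using kp kq a_ne_b by (auto split: if_splits)
  moreover have "kq \<noteq> 2"
  proof
    assume "kq = 2"
    then have "V q ! 2 = V t ! 0" "V q ! 1 = V t ! 4"
      using centre q_edge assms(1) by simp_all
    then show False
      by (rule no_delta_at_alpha_with_beta_at_gamma[OF tile occupiesD(1)[OF assms(3)]])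
  qed
  ultimately show "kp = 4" "kq = 4"
    using kq by simp_all
qed

end

lemma card_fibres_le:
  assumes "finite S" "inj_on g S" "\<forall>s\<in>S. n \<le> card {x\<in>S. h x = g s}"
  shows "n * card S \<le> card S"
proof -
  have "n * card S = (\<Sum>s\<in>S. n)"
    by simp
  also have "\<dots> \<le> (\<Sum>s\<in>S. card {x\<in>S. h x = g s})"
    using assms(3) by (intro sum_mono) blast
  also have "\<dots> = card (\<Union>s\<in>S. {x\<in>S. h x = g s})"
    using assms(1,2) by (intro card_UN_disjoint[symmetric]) (auto simp: inj_on_def)
  also have "\<dots> \<le> card S"
    using assms(1) by (intro card_mono) auto
  finally show ?thesis .
qed

context pentagon_tiling
begin

lemma alpha_vertex_gammas:
  assumes "t < 12"
  obtains p q where "p < 12" "q < 12" "p \<noteq> q" "V p ! 4 = V t ! 0" "V q ! 4 = V t ! 0"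
proof -
  obtain e1 e2 where "vertex_chart P V A B C D E a b t 0 e1 e2"
    by (rule vertex_chart_exists[OF assms, of 0]) simp_all
  then interpret vertex_chart P V A B C D E a b t 0 e1 e2 .
  obtain p q kp kq where pq: "p \<noteq> q" "occupies p kp pi" "occupies q kq (3 * pi / 2)"
    "pent_angle kp = pi / 2" "pent_angle kq = pi / 2"
    "V t ! next5 0 \<in> neighbours p kp" "V t ! prev5 0 \<in> neighbours q kq"
    by (rule alpha_chart_right_angles) simp_all
  then have "kp = 4" "kq = 4"
    using alpha_chart_gammas[OF refl pq(2-7)] by simp_all
  then show ?thesis
    using that pq(1) occupiesD(1,3)[OF pq(2)] occupiesD(1,3)[OF pq(3)] by blast
qed

lemma alpha_vertex_unique:
  assumes "t < 12" "m < 12" "m \<noteq> t"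
  shows "V m ! 0 \<noteq> V t ! 0"
proof -
  obtain e1 e2 where "vertex_chart P V A B C D E a b t 0 e1 e2"
    by (rule vertex_chart_exists[OF assms(1), of 0]) simp_all
  then interpret vertex_chart P V A B C D E a b t 0 e1 e2 .
  show ?thesis
    using alpha_chart_no_other_alpha[OF refl assms(2,3)] .
qed

lemma no_such_tiling: False
proof -
  have "inj_on (\<lambda>t. V t ! 0) {..<12}"
    using alpha_vertex_unique by (auto simp: inj_on_def)
  moreover have "2 \<le> card {p\<in>{..<12}. V p ! 4 = V t ! 0}" if "t \<in> {..<12::nat}" for t
  proof -
    have "t < 12"
      using that by simp
    then obtain p q where "p < 12" "q < 12" "p \<noteq> q" "V p ! 4 = V t ! 0" "V q ! 4 = V t ! 0"
      by (rule alpha_vertex_gammas)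
    then have "{p, q} \<subseteq> {p\<in>{..<12}. V p ! 4 = V t ! 0}" "card {p, q} = 2"
      by auto
    moreover have "finite {p\<in>{..<12::nat}. V p ! 4 = V t ! 0}"
      by simp
    ultimately show ?thesis
      using card_mono[of "{p\<in>{..<12::nat}. V p ! 4 = V t ! 0}" "{p, q}"] by simp
  qed
  ultimately have "2 * card {..<12::nat} \<le> card {..<12::nat}"
    by (intro card_fibres_le) auto
  then show False
    by simp
qed

end

theorem mainTheorem8:
  shows "\<not> (\<exists>(P :: nat \<Rightarrow> (real^3) set) V A B C D E a b.
            edge_to_edge_tiling 12 P V \<and>
            V 0 = [A, B, D, E, C] \<and>
            a4b_pentagon (P 0) A B C D E a b pi (2 * pi / 3) (pi / 2) (pi / 2) (2 * pi / 3) \<and>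
            (\<forall>i<12. \<exists>g. orthogonal_transformation g \<and> P i = g ` P 0 \<and> V i = map g (V 0)))"
  by (intro notI, elim exE conjE) (rule pentagon_tiling.no_such_tiling[OF pentagon_tiling.intro])

end
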